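(* Fix any $\alpha\ge1$ and any constant success probability $p\in(0,1]$. Suppose an algorithm uses only the ordinal profile (no distance queries) and, on every instance and every consistent profile, outputs with probability at least $p$ a set of centers whose $k$-center cost is at most $\alpha\cdot\mathrm{OPT}^{\mathrm{center}}_k$. Then there are instances on which its output has size $\Omega(2^k)$. Moreover, suppose an algorithm in the ordinal query model outputs at most $k$ centers and, on every instance, has $k$-center cost at most $\alpha\cdot \mathrm{OPT}^{\mathrm{center}}_k$ with probability at least $p$. Then it must make $\Omega(k)$ distance queries on some instance.
   Context: Ordinal query model: $(X,d)$ is a finite metric space with $|X|=n$. Every point $x\in X$ reports a ranking $\pi_x$ of all points of $X$ such that $y$ is ranked above $y'$ only if $d(x,y)\le d(x,y')$ (ties broken arbitrarily); the collection is a profile consistent with $d$. An algorithm receives $X$, $k$ and the profile for free. Its only other access to $d$ is by querying exact distances, at a cost of one query each. Algorithms may be randomized. For $C\subseteq X$, $d(x,C)=\min_{c\in C}d(x,c)$. The $k$-center cost of $C$ is $\max_{x\in X}d(x,C)$, and $\mathrm{OPT}^{\mathrm{center}}_k=\min_{C\subseteq X,|C|=k}\max_{x\in X}d(x,C)$. *)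

theory Defs
  imports "HOL-Probability.Probability_Mass_Function"
begin

definition metric_on :: "nat set \<Rightarrow> (nat \<Rightarrow> nat \<Rightarrow> real) \<Rightarrow> bool" where
  "metric_on X d \<longleftrightarrow>
     (\<forall>x\<in>X. \<forall>y\<in>X. d x y = d y x \<and> (d x y = 0 \<longleftrightarrow> x = y)
        \<and> (\<forall>z\<in>X. d x z \<le> d x y + d y z))
   \<and> (\<forall>a b. a \<notin> X \<or> b \<notin> X \<longrightarrow> d a b = 0)"

definition kc_instance :: "nat set \<Rightarrow> (nat \<Rightarrow> nat \<Rightarrow> real) \<Rightarrow> nat \<Rightarrow> bool" where
  "kc_instance X d k \<longleftrightarrow> finite X \<and> metric_on X d \<and> 1 \<le> k \<and> k \<le> card X"

definition consistent_profile ::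
  "nat set \<Rightarrow> (nat \<Rightarrow> nat \<Rightarrow> real) \<Rightarrow> (nat \<Rightarrow> nat list) \<Rightarrow> bool" where
  "consistent_profile X d \<pi> \<longleftrightarrow>
     (\<forall>x. (x \<in> X \<longrightarrow> distinct (\<pi> x) \<and> set (\<pi> x) = X \<and>
             (\<forall>i j. i < j \<longrightarrow> j < length (\<pi> x) \<longrightarrow> d x (\<pi> x ! i) \<le> d x (\<pi> x ! j)))
        \<and> (x \<notin> X \<longrightarrow> \<pi> x = []))"

definition dist_set :: "(nat \<Rightarrow> nat \<Rightarrow> real) \<Rightarrow> nat \<Rightarrow> nat set \<Rightarrow> real" where
  "dist_set d x C = Min (d x ` C)"

definition center_cost :: "nat set \<Rightarrow> (nat \<Rightarrow> nat \<Rightarrow> real) \<Rightarrow> nat set \<Rightarrow> real" where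
  "center_cost X d C = Max ((\<lambda>x. dist_set d x C) ` X)"

definition opt_center :: "nat set \<Rightarrow> (nat \<Rightarrow> nat \<Rightarrow> real) \<Rightarrow> nat \<Rightarrow> real" where
  "opt_center X d k = Min {center_cost X d C | C. C \<subseteq> X \<and> card C = k}"

text \<open>A set C is an alpha-approximate k-center solution (no size constraint here).\<close>
definition good_centers :: "nat set \<Rightarrow> (nat \<Rightarrow> nat \<Rightarrow> real) \<Rightarrow> nat \<Rightarrow> real \<Rightarrow> nat set \<Rightarrow> bool" where
  "good_centers X d k \<alpha> C \<longleftrightarrow> C \<noteq> {} \<and> C \<subseteq> X \<and> center_cost X d C \<le> \<alpha> * opt_center X d k"

text \<open>Deterministic adaptive query strategies: given the history of answered queries,
either ask the distance of a pair (Inl) or stop and output a set of centers (Inr).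
A randomized algorithm is a distribution over such strategies (chosen from X, k, profile).\<close>

type_synonym history = "((nat \<times> nat) \<times> real) list"
type_synonym strategy = "history \<Rightarrow> (nat \<times> nat) + nat set"

fun hist :: "strategy \<Rightarrow> (nat \<Rightarrow> nat \<Rightarrow> real) \<Rightarrow> nat \<Rightarrow> history" where
  "hist S d 0 = []"
| "hist S d (Suc m) =
     (let h = hist S d m in
      case S h of Inl q \<Rightarrow> h @ [(q, d (fst q) (snd q))] | Inr _ \<Rightarrow> h)"

definition terminates :: "strategy \<Rightarrow> (nat \<Rightarrow> nat \<Rightarrow> real) \<Rightarrow> bool" where
  "terminates S d \<longleftrightarrow> (\<exists>m. \<not> isl (S (hist S d m)))"

definition run_output :: "strategy \<Rightarrow> (nat \<Rightarrow> nat \<Rightarrow> real) \<Rightarrow> nat set" where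
  "run_output S d = projr (S (hist S d (LEAST m. \<not> isl (S (hist S d m)))))"

text \<open>The run makes at least m distance queries (non-terminating runs make infinitely many).\<close>
definition queries_at_least :: "strategy \<Rightarrow> (nat \<Rightarrow> nat \<Rightarrow> real) \<Rightarrow> nat \<Rightarrow> bool" where
  "queries_at_least S d m \<longleftrightarrow> (\<forall>j<m. isl (S (hist S d j)))"

end

theory Submission
  imports Defs "HOL-Real_Asymp.Real_Asymp"
begin

text \<open>Let the points be the \<open>2^L\<close> leaves of a complete binary tree and let \<open>k = L + 1\<close>.
For a hidden leaf \<open>s\<close>, put \<open>d\<^sub>s(x,y) = H > \<alpha>\<close> if \<open>y\<close> is at least as far from \<open>x\<close> in the tree as \<open>s\<close>
is, and \<open>d\<^sub>s(x,y) = 1\<close> otherwise. This is a metric, and ranking by tree distance is a consistent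
profile for every \<open>s\<close> simultaneously, so the profile carries no information about \<open>s\<close>. The leaf
\<open>s\<close> together with the \<open>L\<close> sibling subtrees along its root path has cost \<open>1\<close>, while any centre
set missing \<open>s\<close> costs \<open>H\<close>; hence every \<open>\<alpha>\<close>-approximate solution contains \<open>s\<close>.
Averaging over \<open>s\<close>: an output distribution independent of \<open>s\<close> that contains each \<open>s\<close> with
probability \<open>p\<close> has expected size at least \<open>p 2^L\<close>. With distance queries, every answer under
\<open>d\<^sub>s\<close> is one of two values, so \<open>q\<close> queries distinguish at most \<open>2^q\<close> runs, each outputting at
most \<open>k\<close> centres; success for a \<open>p\<close>-fraction of the \<open>s\<close> forces \<open>2^q k \<ge> p 2^L\<close>.\<close>

section \<open>Averaging over a distribution\<close>

lemma card_mult_le_of_prob_ge: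
  fixes M :: "'a pmf" and E :: "'i \<Rightarrow> 'a set"
  assumes "finite I"
    and prob_ge: "\<And>i. i \<in> I \<Longrightarrow> p \<le> measure_pmf.prob M (E i)"
    and count_le: "\<And>x. x \<in> set_pmf M \<Longrightarrow> real (card {i\<in>I. x \<in> E i}) \<le> N"
  shows "real (card I) * p \<le> N"
proof -
  have int: "\<And>i. integrable (measure_pmf M) (indicator (E i) :: 'a \<Rightarrow> real)"
    by (auto intro!: measure_pmf.integrable_const_bound[where B=1])
  have count_eq: "(\<Sum>i\<in>I. indicator (E i) x :: real) = real (card {i\<in>I. x \<in> E i})" for x
    using assms(1) by (simp add: indicator_def sum.If_cases Int_def conj_commute)
  have "real (card I) * p = (\<Sum>i\<in>I. p)" by simp
  also have "\<dots> \<le> (\<Sum>i\<in>I. measure_pmf.expectation M (indicator (E i)))"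
    using prob_ge by (intro sum_mono) simp
  also have "\<dots> = measure_pmf.expectation M (\<lambda>x. \<Sum>i\<in>I. indicator (E i) x)"
    using Bochner_Integration.integral_sum[of I "measure_pmf M" "\<lambda>i. indicator (E i)", OF int]
    by simp
  also have "\<dots> = measure_pmf.expectation M (\<lambda>x. real (card {i\<in>I. x \<in> E i}))"
    by (simp only: count_eq)
  also have "\<dots> \<le> measure_pmf.expectation M (\<lambda>_. N)"
  proof (rule integral_mono_AE)
    show "integrable (measure_pmf M) (\<lambda>x. real (card {i\<in>I. x \<in> E i}))"
      using assms(1) by (intro measure_pmf.integrable_const_bound[where B="real (card I)"])
        (auto intro: card_mono)
  qed (auto intro: AE_pmfI count_le)
  finally show ?thesis by simp
qed

lemma measure_pmf_le_add_of_support: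
  fixes M :: "'a pmf"
  assumes "\<And>x. x \<in> set_pmf M \<Longrightarrow> x \<in> G \<Longrightarrow> x \<in> E \<or> x \<in> B"
  shows "measure_pmf.prob M G \<le> measure_pmf.prob M E + measure_pmf.prob M B"
proof -
  have "measure_pmf.prob M G = measure_pmf.prob M (G \<inter> set_pmf M)"
    by (simp add: measure_Int_set_pmf)
  also have "\<dots> \<le> measure_pmf.prob M (E \<union> B)"
    using assms by (intro measure_pmf.finite_measure_mono) auto
  also have "\<dots> \<le> measure_pmf.prob M E + measure_pmf.prob M B"
    by (rule measure_Un_le) auto
  finally show ?thesis .
qed

section \<open>Runs of query strategies\<close>

lemma hist_const_after_stop:
  assumes "\<not> isl (S (hist S d j))" "j \<le> m"
  shows "hist S d m = hist S d j"
  using assms(2)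
proof (induction m rule: dec_induct)
  case (step m)
  then obtain C where "S (hist S d m) = Inr C" using assms(1) by (cases "S (hist S d j)") auto
  then show ?case using step.IH by (simp add: Let_def)
qed simp

lemma run_output_eq_if_not_queries_at_least:
  assumes "\<not> queries_at_least S d q"
  shows "run_output S d = projr (S (hist S d q))"
proof -
  obtain j where j: "j < q" "\<not> isl (S (hist S d j))"
    using assms unfolding queries_at_least_def by blast
  define m0 where "m0 = (LEAST m. \<not> isl (S (hist S d m)))"
  have m0: "\<not> isl (S (hist S d m0))" unfolding m0_def using j(2) by (rule LeastI)
  have "m0 \<le> j" unfolding m0_def using j(2) by (rule Least_le)
  then have "hist S d q = hist S d m0" using hist_const_after_stop[of S d m0 q, OF m0] j(1) by simp
  then show ?thesis unfolding run_output_def m0_def[symmetric] by simp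
qed

lemma card_hist_le_if_two_answers:
  fixes d :: "'i \<Rightarrow> nat \<Rightarrow> nat \<Rightarrow> real"
  assumes "finite I" and two_answers: "\<And>x y. \<exists>a b. \<forall>i\<in>I. d i x y \<in> {a, b}"
  shows "card ((\<lambda>i. hist S (d i) m) ` I) \<le> 2 ^ m"
proof (induction m)
  case 0
  have "(\<lambda>i. hist S (d i) 0) ` I \<subseteq> {[]}" by auto
  then have "card ((\<lambda>i. hist S (d i) 0) ` I) \<le> card {[] :: history}" by (intro card_mono) auto
  then show ?case by simp
next
  case (Suc m)
  obtain a b where ab: "\<And>x y i. i \<in> I \<Longrightarrow> d i x y \<in> {a x y, b x y}"
    using two_answers by metis
  define extend where "extend h v = (case S h of Inl q \<Rightarrow> h @ [(q, v q)] | Inr _ \<Rightarrow> h)"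
    for h and v :: "nat \<times> nat \<Rightarrow> real"
  let ?Hm = "(\<lambda>i. hist S (d i) m) ` I"
  let ?V = "{\<lambda>q. a (fst q) (snd q), \<lambda>q. b (fst q) (snd q)}"
  have "(\<lambda>i. hist S (d i) (Suc m)) ` I \<subseteq> (\<lambda>(h, v). extend h v) ` (?Hm \<times> ?V)"
  proof
    fix h assume "h \<in> (\<lambda>i. hist S (d i) (Suc m)) ` I"
    then obtain i where i: "i \<in> I" "h = hist S (d i) (Suc m)" by blast
    let ?h = "hist S (d i) m"
    have "\<exists>v\<in>?V. h = extend ?h v"
    proof (cases "S ?h")
      case (Inl q)
      then have "h = ?h @ [(q, d i (fst q) (snd q))]" using i(2) by (simp add: Let_def)
      then show ?thesis using Inl ab[OF i(1), of "fst q" "snd q"] by (auto simp: extend_def)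
    next
      case (Inr C)
      then show ?thesis using i(2) by (auto simp: extend_def Let_def)
    qed
    then show "h \<in> (\<lambda>(h, v). extend h v) ` (?Hm \<times> ?V)" using i(1) by blast
  qed
  moreover have fin: "finite (?Hm \<times> ?V)" using assms(1) by simp
  ultimately have "card ((\<lambda>i. hist S (d i) (Suc m)) ` I) \<le> card ((\<lambda>(h, v). extend h v) ` (?Hm \<times> ?V))"
    by (intro card_mono) auto
  also have "\<dots> \<le> card (?Hm \<times> ?V)" using fin by (rule card_image_le)
  also have "\<dots> \<le> card ?Hm * 2" by (simp add: card_cartesian_product card_insert_le_m1)
  also have "\<dots> \<le> 2 ^ Suc m" using Suc.IH by simp
  finally show ?case .
qed

lemma card_self_in_output_le:
  fixes d :: "nat \<Rightarrow> nat \<Rightarrow> nat \<Rightarrow> real"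
  assumes "finite I" and "\<And>x y. \<exists>a b. \<forall>i\<in>I. d i x y \<in> {a, b}"
  shows "card {i\<in>I. \<not> queries_at_least S (d i) q \<and> i \<in> run_output S (d i)
            \<and> finite (run_output S (d i)) \<and> card (run_output S (d i)) \<le> k} \<le> 2 ^ q * k"
proof -
  let ?Hq = "(\<lambda>i. hist S (d i) q) ` I"
  let ?A = "\<lambda>h. {i\<in>I. i \<in> projr (S h) \<and> finite (projr (S h)) \<and> card (projr (S h)) \<le> k}"
  have "{i\<in>I. \<not> queries_at_least S (d i) q \<and> i \<in> run_output S (d i)
            \<and> finite (run_output S (d i)) \<and> card (run_output S (d i)) \<le> k} \<subseteq> (\<Union>h\<in>?Hq. ?A h)"
    using run_output_eq_if_not_queries_at_least by fastforce
  then have "card {i\<in>I. \<not> queries_at_least S (d i) q \<and> i \<in> run_output S (d i)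
            \<and> finite (run_output S (d i)) \<and> card (run_output S (d i)) \<le> k} \<le> card (\<Union>h\<in>?Hq. ?A h)"
    using assms(1) by (intro card_mono) auto
  also have "\<dots> \<le> (\<Sum>h\<in>?Hq. card (?A h))" using assms(1) by (intro card_UN_le) auto
  also have "\<dots> \<le> (\<Sum>h\<in>?Hq. k)"
  proof (intro sum_mono)
    fix h
    show "card (?A h) \<le> k"
    proof (cases "finite (projr (S h)) \<and> card (projr (S h)) \<le> k")
      case True
      then have "card (?A h) \<le> card (projr (S h))" by (intro card_mono) auto
      with True show ?thesis by linarith
    qed auto
  qed
  also have "\<dots> \<le> 2 ^ q * k" using card_hist_le_if_two_answers[OF assms] by simp
  finally show ?thesis .
qed

section \<open>The dyadic ultrametric\<close>

text \<open>\<open>split_level x y\<close> is the height of the lowest common ancestor of the leaves \<open>x\<close> and \<open>y\<close>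
of the infinite complete binary tree whose height-\<open>t\<close> subtrees are the blocks
\<open>{j 2^t ..< (j+1) 2^t}\<close>.\<close>

definition split_level :: "nat \<Rightarrow> nat \<Rightarrow> nat" where
  "split_level x y = (LEAST t. x div 2^t = y div 2^t)"

lemma div_pow_eq_mono:
  assumes "x div 2^t = y div (2::nat)^t" "t \<le> u"
  shows "x div 2^u = y div (2::nat)^u"
proof -
  have "(2::nat)^u = 2^t * 2^(u-t)" using assms(2) by (simp flip: power_add)
  then show ?thesis using assms(1) by (simp add: div_mult2_eq)
qed

lemma split_level_le_iff: "split_level x y \<le> t \<longleftrightarrow> x div 2^t = y div (2::nat)^t"
proof
  have "x < 2^(x+y)" "y < 2^(x+y)" using less_exp[of "x+y"] by linarith+
  then have "\<exists>t. x div 2^t = y div (2::nat)^t" by (intro exI[of _ "x+y"]) simp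
  then have "x div 2^split_level x y = y div 2^split_level x y"
    unfolding split_level_def by (rule LeastI_ex)
  moreover assume "split_level x y \<le> t"
  ultimately show "x div 2^t = y div 2^t" using div_pow_eq_mono by blast
next
  assume "x div 2^t = y div (2::nat)^t"
  then show "split_level x y \<le> t" unfolding split_level_def by (rule Least_le)
qed

lemma split_level_commute: "split_level x y = split_level y x"
  unfolding split_level_def by (simp add: eq_commute)

lemma split_level_eq_0_iff: "split_level x y = 0 \<longleftrightarrow> x = y"
  using split_level_le_iff[of x y 0] by simp

lemma split_level_self [simp]: "split_level x x = 0"
  by (simp add: split_level_eq_0_iff)

lemma split_level_ultra: "split_level x z \<le> max (split_level x y) (split_level y z)"
proof -
  let ?m = "max (split_level x y) (split_level y z)"
  have "x div 2^?m = y div 2^?m" "y div 2^?m = z div 2^?m"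
    by (simp_all flip: split_level_le_iff)
  then show ?thesis by (simp add: split_level_le_iff)
qed

lemma split_level_le_of_less_pow: "x < 2^L \<Longrightarrow> y < 2^L \<Longrightarrow> split_level x y \<le> L"
  by (simp add: split_level_le_iff)

section \<open>The hard instances\<close>

definition hidden_dist :: "nat set \<Rightarrow> real \<Rightarrow> nat \<Rightarrow> nat \<Rightarrow> nat \<Rightarrow> real" where
  "hidden_dist X H s x y =
     (if x \<in> X \<and> y \<in> X then (if x = y then 0 else if split_level x s \<le> split_level x y then H else 1)
      else 0)"

definition level_profile :: "nat set \<Rightarrow> nat \<Rightarrow> nat list" where
  "level_profile X x = (if x \<in> X then sort_key (split_level x) (sorted_list_of_set X) else [])"

lemma hidden_dist_commute: "hidden_dist X H s x y = hidden_dist X H s y x"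
proof -
  have "split_level y s \<le> split_level x y" if "split_level x s \<le> split_level x y" for x y
    using that split_level_ultra[of y s x] split_level_commute[of y x] by (simp add: max_def)
  then have "split_level x s \<le> split_level x y \<longleftrightarrow> split_level y s \<le> split_level y x"
    by (metis split_level_commute)
  then show ?thesis unfolding hidden_dist_def by auto
qed

lemma hidden_dist_two_answers: "\<exists>a b. \<forall>s\<in>I. hidden_dist X H s x y \<in> {a, b}"
  by (rule exI[of _ "if x \<in> X \<and> y \<in> X \<and> x \<noteq> y then H else 0"],
      rule exI[of _ "if x \<in> X \<and> y \<in> X \<and> x \<noteq> y then 1 else 0"])
    (auto simp: hidden_dist_def)

lemma metric_on_hidden_dist:
  assumes "H \<ge> 2"
  shows "metric_on X (hidden_dist X H s)"
  unfolding metric_on_def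
proof (intro conjI ballI allI impI)
  fix x y assume "x \<in> X" "y \<in> X"
  show "hidden_dist X H s x y = hidden_dist X H s y x" by (rule hidden_dist_commute)
next
  fix x y z assume X: "x \<in> X" "y \<in> X" "z \<in> X"
  text \<open>Two near steps cannot combine into a far one: if \<open>s\<close> lies strictly beyond \<open>y\<close> seen from
    \<open>x\<close> and beyond \<open>z\<close> seen from \<open>y\<close>, it lies beyond \<open>z\<close> seen from \<open>x\<close>.\<close>
  have "split_level x s \<le> split_level x z \<Longrightarrow>
      split_level x s \<le> split_level x y \<or> split_level y s \<le> split_level y z"
    using split_level_ultra[of x z y] split_level_ultra[of y s x] split_level_commute[of x y]
    by linarith
  then show "hidden_dist X H s x z \<le> hidden_dist X H s x y + hidden_dist X H s y z"
    using X assms unfolding hidden_dist_def by (auto split: if_splits)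
qed (use assms in \<open>auto simp: hidden_dist_def\<close>)

lemma hidden_dist_mono:
  assumes "H \<ge> 2" "x \<in> X" "y \<in> X" "z \<in> X" "split_level x y \<le> split_level x z"
  shows "hidden_dist X H s x y \<le> hidden_dist X H s x z"
proof (cases "x = y")
  case False
  then have "x \<noteq> z" using assms(5) split_level_eq_0_iff[of x y] by auto
  then show ?thesis using False assms unfolding hidden_dist_def by auto
qed (use assms in \<open>simp add: hidden_dist_def\<close>)

lemma consistent_level_profile:
  assumes "H \<ge> 2" "finite X"
  shows "consistent_profile X (hidden_dist X H s) (level_profile X)"
  unfolding consistent_profile_def
proof (intro allI conjI impI)
  fix x assume x: "x \<in> X"
  let ?l = "sort_key (split_level x) (sorted_list_of_set X)"
  show "distinct (level_profile X x)" "set (level_profile X x) = X"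
    using x assms by (simp_all add: level_profile_def)
  fix i j assume ij: "i < j" "j < length (level_profile X x)"
  then have "split_level x (?l ! i) \<le> split_level x (?l ! j)"
    using sorted_nth_mono[of "map (split_level x) ?l" i j] x by (simp add: level_profile_def)
  moreover have "?l ! i \<in> X" "?l ! j \<in> X"
    using ij x assms by (auto simp: level_profile_def simp del: set_sort intro!: nth_mem
        [of _ ?l, simplified set_sort set_sorted_list_of_set[OF assms(2)]])
  ultimately show "hidden_dist X H s x (level_profile X x ! i) \<le> hidden_dist X H s x (level_profile X x ! j)"
    using hidden_dist_mono[OF assms(1) x] x by (simp add: level_profile_def)
qed (simp add: level_profile_def)

lemma hidden_instance:
  assumes "H \<ge> 2"
  shows "kc_instance {..<2^L} (hidden_dist {..<2^L} H s) (Suc L)"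
    "consistent_profile {..<2^L} (hidden_dist {..<2^L} H s) (level_profile {..<2^L})"
  using metric_on_hidden_dist[OF assms] consistent_level_profile[OF assms] Suc_leI[OF less_exp[of L]]
  by (auto simp: kc_instance_def)

section \<open>The optimal centres\<close>

text \<open>\<open>sibling s t\<close> is the first leaf of the height-\<open>t\<close> subtree that is the sibling of the one
containing \<open>s\<close>.\<close>

definition sibling :: "nat \<Rightarrow> nat \<Rightarrow> nat" where
  "sibling s t = (let u = s div 2^t in (if even u then u + 1 else u - 1) * 2^t)"

lemma div_pow_Suc: "(x::nat) div 2^(Suc t) = x div 2^t div 2"
  by (metis div_mult2_eq power_Suc2)

lemma split_level_sibling: "split_level (sibling s t) s = Suc t"
proof -
  let ?u = "s div 2^t"
  have "sibling s t div 2^t = (if even ?u then ?u + 1 else ?u - 1)"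
    by (simp add: sibling_def Let_def)
  then have "sibling s t div 2^t \<noteq> ?u" "sibling s t div 2^t div 2 = ?u div 2"
    by (auto elim!: evenE oddE)
  then have "split_level (sibling s t) s \<le> Suc t" "\<not> split_level (sibling s t) s \<le> t"
    by (simp_all only: split_level_le_iff div_pow_Suc) simp_all
  then show ?thesis by simp
qed

lemma split_level_sibling_le:
  assumes "split_level y s = Suc t"
  shows "split_level y (sibling s t) \<le> t"
proof -
  have ys: "y div 2^t div 2 = s div 2^t div 2" "y div 2^t \<noteq> s div 2^t"
    using assms split_level_le_iff[of y s "Suc t"] split_level_le_iff[of y s t]
    by (simp_all only: div_pow_Suc) simp_all
  have fs: "sibling s t div 2^t div 2 = s div 2^t div 2" "sibling s t div 2^t \<noteq> s div 2^t"
    using split_level_sibling[of s t] split_level_le_iff[of "sibling s t" s "Suc t"]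
      split_level_le_iff[of "sibling s t" s t]
    by (simp_all only: div_pow_Suc) simp_all
  text \<open>A block of size \<open>2^(t+1)\<close> has only two halves.\<close>
  have "y div 2^t = sibling s t div 2^t"
    using ys fs by (metis div_mult_mod_eq less_2_cases_iff mod_less_divisor zero_less_numeral)
  then show ?thesis by (simp add: split_level_le_iff)
qed

lemma sibling_less_pow:
  assumes "s < 2^L" "t < L"
  shows "sibling s t < 2^L"
proof -
  have "split_level (sibling s t) s \<le> L" using split_level_sibling[of s t] assms by simp
  then show ?thesis using assms by (simp add: split_level_le_iff div_eq_0_iff)
qed

definition sibling_centers :: "nat \<Rightarrow> nat \<Rightarrow> nat set" where
  "sibling_centers L s = insert s (sibling s ` {..<L})"

lemma sibling_centers_subset: "s < 2^L \<Longrightarrow> sibling_centers L s \<subseteq> {..<2^L}"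
  using sibling_less_pow by (auto simp: sibling_centers_def)

lemma card_sibling_centers: "card (sibling_centers L s) = Suc L"
proof -
  have "inj_on (sibling s) {..<L}"
    by (rule inj_onI) (metis split_level_sibling Suc_inject)
  moreover have "s \<notin> sibling s ` {..<L}"
    using split_level_sibling[of s] by (metis imageE nat.distinct(1) split_level_self)
  ultimately show ?thesis by (simp add: sibling_centers_def card_image)
qed

lemma center_cost_sibling_centers:
  assumes "s < 2^L" "H \<ge> 2"
  shows "center_cost {..<2^L} (hidden_dist {..<2^L} H s) (sibling_centers L s) \<le> 1"
proof -
  let ?X = "{..<(2::nat)^L}"
  have "dist_set (hidden_dist ?X H s) y (sibling_centers L s) \<le> 1" if y: "y \<in> ?X" for y
  proof -
    have "\<exists>c\<in>sibling_centers L s. hidden_dist ?X H s y c \<le> 1"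
    proof (cases "y = s")
      case False
      then obtain t where t: "split_level y s = Suc t"
        using split_level_eq_0_iff[of y s] not0_implies_Suc by blast
      then have "t < L" using split_level_le_of_less_pow[of y L s] y assms(1) by simp
      then have c: "sibling s t \<in> sibling_centers L s" "sibling s t \<in> ?X"
        using sibling_less_pow[OF assms(1)] by (auto simp: sibling_centers_def)
      have "\<not> split_level y s \<le> split_level y (sibling s t)"
        using split_level_sibling_le[OF t] t by simp
      then have "hidden_dist ?X H s y (sibling s t) \<le> 1"
        using y c(2) by (auto simp: hidden_dist_def)
      then show ?thesis using c(1) by blast
    qed (auto simp: sibling_centers_def hidden_dist_def)
    then obtain c where "c \<in> sibling_centers L s" "hidden_dist ?X H s y c \<le> 1" by blast
    moreover have "finite (sibling_centers L s)" by (simp add: sibling_centers_def)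
    ultimately show ?thesis unfolding dist_set_def by (intro order_trans[OF Min_le]) auto
  qed
  then show ?thesis unfolding center_cost_def by (subst Max_le_iff) (auto simp: lessThan_empty_iff)
qed

lemma opt_center_hidden_le_1:
  assumes "s < 2^L" "H \<ge> 2"
  shows "opt_center {..<2^L} (hidden_dist {..<2^L} H s) (Suc L) \<le> 1"
proof -
  let ?X = "{..<(2::nat)^L}" let ?d = "hidden_dist ?X H s"
  have "{center_cost ?X ?d C | C. C \<subseteq> ?X \<and> card C = Suc L} \<subseteq> center_cost ?X ?d ` Pow ?X"
    by auto
  then have "finite {center_cost ?X ?d C | C. C \<subseteq> ?X \<and> card C = Suc L}"
    by (rule finite_subset) simp
  moreover have "center_cost ?X ?d (sibling_centers L s) \<in> {center_cost ?X ?d C | C. C \<subseteq> ?X \<and> card C = Suc L}"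
    using sibling_centers_subset[OF assms(1)] card_sibling_centers by blast
  ultimately have "opt_center ?X ?d (Suc L) \<le> center_cost ?X ?d (sibling_centers L s)"
    unfolding opt_center_def by (rule Min_le)
  then show ?thesis using center_cost_sibling_centers[OF assms] by linarith
qed

lemma hidden_mem_good_centers:
  assumes "s < 2^L" "H \<ge> 2" "\<alpha> \<ge> 0" "H > \<alpha>"
    and good: "good_centers {..<2^L} (hidden_dist {..<2^L} H s) (Suc L) \<alpha> C"
  shows "s \<in> C"
proof (rule ccontr)
  assume s: "s \<notin> C"
  let ?X = "{..<(2::nat)^L}" let ?d = "hidden_dist ?X H s"
  have C: "C \<noteq> {}" "C \<subseteq> ?X" "center_cost ?X ?d C \<le> \<alpha> * opt_center ?X ?d (Suc L)"
    using good by (auto simp: good_centers_def)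
  have "?d s ` C = {H}"
    using C(1,2) s assms(1) by (force simp: hidden_dist_def)
  then have "H = dist_set ?d s C" by (simp add: dist_set_def)
  also have "\<dots> \<le> center_cost ?X ?d C"
    unfolding center_cost_def using assms(1) by (intro Max_ge) auto
  also have "\<dots> \<le> \<alpha>"
    using C(3) mult_left_mono[OF opt_center_hidden_le_1[OF assms(1,2)] assms(3)] by simp
  finally show False using assms(4) by simp
qed

lemma ordinal_output_size_lower_bound:
  fixes \<alpha> p :: real
  assumes "\<alpha> \<ge> 0" and "0 < p"
    and A: "\<forall>X d k \<pi>. kc_instance X d k \<longrightarrow> consistent_profile X d \<pi> \<longrightarrow>
           set_pmf (A X k \<pi>) \<subseteq> Pow X \<and>
           measure_pmf.prob (A X k \<pi>) {C. good_centers X d k \<alpha> C} \<ge> p"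
    and "k \<ge> 1"
  shows "\<exists>X d \<pi>. kc_instance X d k \<and> consistent_profile X d \<pi> \<and>
           measure_pmf.prob (A X k \<pi>) {C. real (card C) \<ge> p/4 * 2 ^ k} > 0"
proof (rule ccontr)
  obtain L where k: "k = Suc L" using \<open>k \<ge> 1\<close> by (cases k) auto
  define X where "X = {..<(2::nat)^L}"
  define H where "H = \<alpha> + 2"
  define M where "M = A X k (level_profile X)"
  let ?big = "{C. real (card C) \<ge> p/4 * 2 ^ k}"
  have H: "H \<ge> 2" "\<alpha> \<ge> 0" "H > \<alpha>" using assms(1) unfolding H_def by auto
  note inst = hidden_instance[OF H(1), of L, folded X_def k]
  assume "\<not> ?thesis"
  then have "\<not> measure_pmf.prob M ?big > 0" using inst[of 0] unfolding M_def by blast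
  then have big: "measure_pmf.prob M ?big = 0" using measure_nonneg[of M ?big] by linarith
  have "p \<le> measure_pmf.prob M {C. s \<in> C \<and> C \<notin> ?big}" if s: "s \<in> X" for s
  proof -
    have "p \<le> measure_pmf.prob M {C. good_centers X (hidden_dist X H s) k \<alpha> C}"
      using A inst[of s] unfolding M_def by blast
    also have "\<dots> \<le> measure_pmf.prob M {C. s \<in> C \<and> C \<notin> ?big} + measure_pmf.prob M ?big"
      using hidden_mem_good_centers[OF _ H, of s L] s
      by (intro measure_pmf_le_add_of_support) (auto simp: X_def k)
    finally show ?thesis using big by simp
  qed
  moreover have "real (card {s\<in>X. C \<in> {C. s \<in> C \<and> C \<notin> ?big}}) \<le> p/4 * 2 ^ k"
    if "C \<in> set_pmf M" for C
  proof (cases "C \<in> ?big")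
    case False
    have "C \<subseteq> X" using A inst[of 0] that unfolding M_def by blast
    then have "card {s\<in>X. C \<in> {C. s \<in> C \<and> C \<notin> ?big}} \<le> card C"
      by (intro card_mono) (auto simp: X_def finite_subset)
    then show ?thesis using False by simp
  qed (use assms(2) in simp)
  ultimately have "real (card X) * p \<le> p/4 * 2 ^ k"
    by (intro card_mult_le_of_prob_ge) (auto simp: X_def)
  then show False using assms(2) unfolding X_def k by simp
qed

lemma pow_quarter_mult_negligible:
  assumes "p > (0::real)"
  shows "\<exists>k0. \<forall>k\<ge>k0. real (2 ^ nat \<lceil>1/4 * real k\<rceil> * k) < p * 2 ^ (k - 1)"
proof -
  have "(\<lambda>k::nat. real k * 2 powr (real k / 4 + 1) / (2 powr real k / 2)) \<longlonglongrightarrow> 0"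
    by real_asymp
  then have "\<forall>\<^sub>F k in sequentially. real k * 2 powr (real k / 4 + 1) / (2 powr real k / 2) < p"
    using assms by (rule order_tendstoD)
  then obtain k0 where k0: "\<And>k. k \<ge> k0 \<Longrightarrow> real k * 2 powr (real k / 4 + 1) / (2 powr real k / 2) < p"
    unfolding eventually_sequentially by blast
  have "real (2 ^ nat \<lceil>1/4 * real k\<rceil> * k) < p * 2 ^ (k - 1)" if "k \<ge> max 1 k0" for k
  proof -
    have "real (2 ^ nat \<lceil>1/4 * real k\<rceil>) = 2 powr real (nat \<lceil>1/4 * real k\<rceil>)"
      by (subst powr_realpow) auto
    also have "\<dots> \<le> 2 powr (real k / 4 + 1)" by (intro powr_mono) (auto simp: of_nat_nat)
    finally have "real (2 ^ nat \<lceil>1/4 * real k\<rceil> * k) \<le> real k * 2 powr (real k / 4 + 1)"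
      by (simp add: mult.commute mult_left_mono)
    also have "\<dots> < p * (2 powr real k / 2)"
      using k0[of k] that by (simp add: divide_less_eq)
    also have "2 powr real k = 2 ^ (k - 1) * 2"
      using that by (simp add: powr_realpow flip: power_Suc2)
    finally show ?thesis by simp
  qed
  then show ?thesis by blast
qed

lemma ordinal_query_lower_bound:
  fixes \<alpha> p :: real
  assumes "\<alpha> \<ge> 0"
    and A: "\<forall>X d k \<pi>. kc_instance X d k \<longrightarrow> consistent_profile X d \<pi> \<longrightarrow>
           (\<forall>S\<in>set_pmf (A X k \<pi>). terminates S d \<longrightarrow>
               run_output S d \<subseteq> X \<and> card (run_output S d) \<le> k) \<and>
           measure_pmf.prob (A X k \<pi>)
             {S. terminates S d \<and> good_centers X d k \<alpha> (run_output S d)} \<ge> p"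
    and "k \<ge> 1" and few: "real (2 ^ q * k) < p * 2 ^ (k - 1)"
  shows "\<exists>X d \<pi>. kc_instance X d k \<and> consistent_profile X d \<pi> \<and>
           measure_pmf.prob (A X k \<pi>) {S. queries_at_least S d q} > 0"
proof (rule ccontr)
  obtain L where k: "k = Suc L" using \<open>k \<ge> 1\<close> by (cases k) auto
  define X where "X = {..<(2::nat)^L}"
  define H where "H = \<alpha> + 2"
  define M where "M = A X k (level_profile X)"
  let ?d = "hidden_dist X H"
  let ?Q = "\<lambda>s. {S. queries_at_least S (?d s) q}"
  let ?E = "\<lambda>s. {S. \<not> queries_at_least S (?d s) q \<and> terminates S (?d s)
                   \<and> good_centers X (?d s) k \<alpha> (run_output S (?d s))}"
  have H: "H \<ge> 2" "\<alpha> \<ge> 0" "H > \<alpha>" using assms(1) unfolding H_def by auto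
  note inst = hidden_instance[OF H(1), of L, folded X_def k]
  assume "\<not> ?thesis"
  then have not_pos: "\<not> measure_pmf.prob M (?Q s) > 0" for s
    using inst[of s] unfolding M_def by blast
  have "p \<le> measure_pmf.prob M (?E s)" for s
  proof -
    have "p \<le> measure_pmf.prob M {S. terminates S (?d s) \<and> good_centers X (?d s) k \<alpha> (run_output S (?d s))}"
      using A inst[of s] unfolding M_def by blast
    also have "\<dots> \<le> measure_pmf.prob M (?E s) + measure_pmf.prob M (?Q s)"
      by (intro measure_pmf_le_add_of_support) auto
    finally show ?thesis using not_pos[of s] measure_nonneg[of M "?Q s"] by linarith
  qed
  moreover have "real (card {s\<in>X. S \<in> ?E s}) \<le> real (2 ^ q * k)" if S: "S \<in> set_pmf M" for S
  proof -
    have "{s\<in>X. S \<in> ?E s} \<subseteq> {s\<in>X. \<not> queries_at_least S (?d s) q \<and> s \<in> run_output S (?d s)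
            \<and> finite (run_output S (?d s)) \<and> card (run_output S (?d s)) \<le> k}"
    proof
      fix s assume "s \<in> {s\<in>X. S \<in> ?E s}"
      then have s: "s \<in> X" "S \<in> ?E s" by auto
      then have "run_output S (?d s) \<subseteq> X" "card (run_output S (?d s)) \<le> k"
        using A inst[of s] S unfolding M_def by blast+
      moreover have "s \<in> run_output S (?d s)"
        using hidden_mem_good_centers[OF _ H, of s L] s unfolding X_def k by simp
      ultimately show "s \<in> {s\<in>X. \<not> queries_at_least S (?d s) q \<and> s \<in> run_output S (?d s)
            \<and> finite (run_output S (?d s)) \<and> card (run_output S (?d s)) \<le> k}"
        using s by (auto simp: X_def finite_subset)
    qed
    then have "card {s\<in>X. S \<in> ?E s} \<le> card {s\<in>X. \<not> queries_at_least S (?d s) q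
            \<and> s \<in> run_output S (?d s) \<and> finite (run_output S (?d s)) \<and> card (run_output S (?d s)) \<le> k}"
      by (intro card_mono) (simp add: X_def)
    also have "\<dots> \<le> 2 ^ q * k"
      by (rule card_self_in_output_le[OF _ hidden_dist_two_answers]) (simp add: X_def)
    finally show ?thesis by (simp only: of_nat_le_iff)
  qed
  ultimately have "real (card X) * p \<le> real (2 ^ q * k)"
    by (intro card_mult_le_of_prob_ge) (auto simp: X_def)
  then show False using few unfolding X_def k by (simp add: mult.commute)
qed

theorem mainTheorem10:
  fixes \<alpha> p :: real
  assumes "\<alpha> \<ge> 1" and "0 < p" and "p \<le> 1"
  shows
   "(\<exists>c>0. \<exists>k0. \<forall>A :: nat set \<Rightarrow> nat \<Rightarrow> (nat \<Rightarrow> nat list) \<Rightarrow> nat set pmf.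
       (\<forall>X d k \<pi>. kc_instance X d k \<longrightarrow> consistent_profile X d \<pi> \<longrightarrow>
           set_pmf (A X k \<pi>) \<subseteq> Pow X \<and>
           measure_pmf.prob (A X k \<pi>) {C. good_centers X d k \<alpha> C} \<ge> p)
       \<longrightarrow> (\<forall>k\<ge>k0. \<exists>X d \<pi>. kc_instance X d k \<and> consistent_profile X d \<pi> \<and>
              measure_pmf.prob (A X k \<pi>) {C. real (card C) \<ge> c * 2 ^ k} > 0))
  \<and>
   (\<exists>c>0. \<exists>k0. \<forall>A :: nat set \<Rightarrow> nat \<Rightarrow> (nat \<Rightarrow> nat list) \<Rightarrow> strategy pmf.
       (\<forall>X d k \<pi>. kc_instance X d k \<longrightarrow> consistent_profile X d \<pi> \<longrightarrow>
           (\<forall>S\<in>set_pmf (A X k \<pi>). terminates S d \<longrightarrow>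
               run_output S d \<subseteq> X \<and> card (run_output S d) \<le> k) \<and>
           measure_pmf.prob (A X k \<pi>)
             {S. terminates S d \<and> good_centers X d k \<alpha> (run_output S d)} \<ge> p)
       \<longrightarrow> (\<forall>k\<ge>k0. \<exists>X d \<pi>. kc_instance X d k \<and> consistent_profile X d \<pi> \<and>
              measure_pmf.prob (A X k \<pi>)
                {S. queries_at_least S d (nat \<lceil>c * real k\<rceil>)} > 0))"
proof -
  obtain k0 where k0: "\<forall>k\<ge>k0. real (2 ^ nat \<lceil>1/4 * real k\<rceil> * k) < p * 2 ^ (k - 1)"
    using pow_quarter_mult_negligible[OF assms(2)] by blast
  have "\<alpha> \<ge> 0" using assms(1) by simp
  show ?thesis
    apply (intro conjI)
     apply (rule exI[of _ "p/4"], rule conjI, simp add: assms(2))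
     apply (rule exI[of _ 1], intro allI impI)
     apply (erule ordinal_output_size_lower_bound[OF \<open>\<alpha> \<ge> 0\<close> assms(2)], assumption)
    apply (rule exI[of _ "1/4"], rule conjI, simp)
    apply (rule exI[of _ "max 1 k0"], intro allI impI)
    apply (erule ordinal_query_lower_bound[OF \<open>\<alpha> \<ge> 0\<close>])
    using k0 by auto
qed

end
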